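(* Let $\hat M,M^\star\in\mathbb R^{(n_1+n_2)\times(m_1+m_2)}$ be partitioned into blocks $\hat M_{ij},M^\star_{ij}\in\mathbb R^{n_i\times m_j}$, $i,j\in\{1,2\}$. Suppose $\operatorname{rank}\hat M\le p$, $\operatorname{rank}M^\star=p$, $\sigma_p(M^\star_{11})>0$, and for all $(i,j)\ne(2,2)$, $\|\hat M_{ij}-M^\star_{ij}\|_F\le\epsilon$ and $\|M^\star_{ij}\|_F\le M$, where $\epsilon\le\sigma_p(M^\star_{11})/2$. Then $$\|\hat M_{22}-M^\star_{22}\|_F\le 8\epsilon\frac{M^2}{\sigma_p(M^\star_{11})^2}.$$
   Context: $\|\cdot\|_F$ is the Frobenius norm and $\sigma_p(A)$ denotes the $p$-th largest singular value of a matrix $A$. *)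

theory Defs
  imports "Jordan_Normal_Form.Matrix" "Jordan_Normal_Form.DL_Rank" "Jordan_Normal_Form.Char_Poly"
    "HOL-Computational_Algebra.Polynomial" "HOL-Library.Multiset"
begin

definition frob_norm :: "real mat \<Rightarrow> real" where
  "frob_norm A = sqrt (\<Sum>i<dim_row A. \<Sum>j<dim_col A. (A $$ (i,j))^2)"

definition singular_values :: "real mat \<Rightarrow> real list" where
  "singular_values A =
     rev (sorted_list_of_multiset (image_mset sqrt (proots (char_poly (transpose_mat A * A)))))"

text \<open>sigma p A: the p-th largest singular value (1-indexed); 0 beyond the list.\<close>
definition sigma :: "nat \<Rightarrow> real mat \<Rightarrow> real" where
  "sigma p A = (if 1 \<le> p \<and> p \<le> length (singular_values A)
                then singular_values A ! (p - 1) else 0)"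

definition mat_rank :: "real mat \<Rightarrow> nat" where
  "mat_rank A = vec_space.rank (dim_row A) A"

end

theory Submission
  imports Defs "HOL-Analysis.L2_Norm"
begin

text \<open>
  Let \<open>\<sigma> = sigma p S11\<close>. Orthonormal eigenvectors of \<open>S11\<^sup>T S11\<close> for its \<open>p\<close> largest
  eigenvalues, obtained by Householder deflation, form an isometry \<open>U\<close> with
  \<open>\<sigma> \<parallel>y\<parallel> \<le> \<parallel>S11 U y\<parallel>\<close>, and since \<open>\<epsilon> \<le> \<sigma> / 2\<close> also \<open>\<sigma> / 2 \<parallel>y\<parallel> \<le> \<parallel>H11 U y\<parallel>\<close>.
  So the first block column restricted to \<open>U\<close> already has rank \<open>p\<close>; as both block matrices
  have rank at most \<open>p\<close>, column \<open>j\<close> of the second block column equals \<open>(S11; S21) U y\<^sub>j\<close>,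
  resp. \<open>(H11; H21) U y'\<^sub>j\<close>. Comparing \<open>y\<^sub>j\<close> and \<open>y'\<^sub>j\<close> through the two lower bounds
  bounds column \<open>j\<close> of \<open>H22 - S22\<close> by \<open>2 (\<epsilon> + M) / \<sigma>\<close> times column \<open>j\<close> of \<open>H12 - S12\<close>
  plus \<open>2 \<epsilon> / \<sigma> + 2 M \<epsilon> / \<sigma>\<^sup>2\<close> times column \<open>j\<close> of \<open>S12\<close>. Summing over the columns and
  using \<open>\<sigma> \<le> M\<close> gives the claim.
\<close>

section \<open>Euclidean and Frobenius norms\<close>

definition vec_norm :: "real vec \<Rightarrow> real" where
  "vec_norm v = sqrt (v \<bullet> v)"

lemma scalar_prod_self_eq_sum_squares: "(v::real vec) \<bullet> v = (\<Sum>i<dim_vec v. (v $ i)^2)"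
  unfolding scalar_prod_def by (simp add: power2_eq_square atLeast0LessThan)

lemma vec_norm_eq_L2_set: "vec_norm v = L2_set (($) v) {..<dim_vec v}"
  unfolding vec_norm_def L2_set_def scalar_prod_self_eq_sum_squares ..

lemma vec_norm_nonneg: "0 \<le> vec_norm v"
  unfolding vec_norm_eq_L2_set by simp

lemma vec_norm_power2: "(vec_norm v)^2 = v \<bullet> v"
  unfolding vec_norm_def scalar_prod_self_eq_sum_squares by (simp add: sum_nonneg)

lemma vec_norm_eq_0_iff:
  assumes "v \<in> carrier_vec n"
  shows "vec_norm v = 0 \<longleftrightarrow> v = 0\<^sub>v n"
  using conjugate_square_eq_0_vec[OF assms] by (simp add: vec_norm_def)

lemma vec_norm_zero [simp]: "vec_norm (0\<^sub>v n) = 0"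
  using vec_norm_eq_0_iff[of "0\<^sub>v n" n] by simp

lemma vec_norm_add_le:
  assumes "v \<in> carrier_vec n" "w \<in> carrier_vec n"
  shows "vec_norm (v + w) \<le> vec_norm v + vec_norm w"
proof -
  have "L2_set (($) (v + w)) {..<n} = L2_set (\<lambda>i. v $ i + w $ i) {..<n}"
    using assms by (intro L2_set_cong) auto
  then show ?thesis
    using assms L2_set_triangle_ineq[of "($) v" "($) w" "{..<n}"] by (simp add: vec_norm_eq_L2_set)
qed

lemma vec_norm_le_add_diff:
  assumes "v \<in> carrier_vec n" "w \<in> carrier_vec n"
  shows "vec_norm v \<le> vec_norm w + vec_norm (v - w)"
proof -
  have "v = w + (v - w)" using assms by auto
  then show ?thesis using vec_norm_add_le[of w n "v - w"] assms by (metis minus_carrier_vec)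
qed

lemma vec_norm_uminus: "vec_norm (- v) = vec_norm v"
  unfolding vec_norm_def by simp

lemma vec_norm_minus_commute:
  assumes "v \<in> carrier_vec n" "w \<in> carrier_vec n"
  shows "vec_norm (v - w) = vec_norm (w - v)"
  using assms unfolding vec_norm_eq_L2_set L2_set_def by (auto simp: power2_commute intro!: sum.cong)

lemma vec_norm_diff_le:
  assumes "v \<in> carrier_vec n" "w \<in> carrier_vec n"
  shows "vec_norm (v - w) \<le> vec_norm v + vec_norm w"
  using vec_norm_add_le[of v n "- w"] assms by (simp add: vec_norm_uminus minus_add_uminus_vec)

lemma abs_scalar_prod_le_vec_norm:
  assumes "v \<in> carrier_vec n" "w \<in> carrier_vec n"
  shows "\<bar>v \<bullet> w\<bar> \<le> vec_norm v * vec_norm w"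
proof -
  have "\<bar>v \<bullet> w\<bar> = \<bar>\<Sum>i<n. v $ i * w $ i\<bar>"
    using assms by (simp add: scalar_prod_def atLeast0LessThan)
  also have "\<dots> \<le> (\<Sum>i<n. \<bar>v $ i\<bar> * \<bar>w $ i\<bar>)"
    unfolding abs_mult[symmetric] by (rule sum_abs)
  also have "\<dots> \<le> vec_norm v * vec_norm w"
    using assms L2_set_mult_ineq[of "($) v" "($) w"] by (simp add: vec_norm_eq_L2_set)
  finally show ?thesis .
qed

lemma frob_norm_nonneg: "0 \<le> frob_norm A"
  unfolding frob_norm_def by (auto intro!: sum_nonneg)

lemma frob_norm_eq_L2_set_rows:
  assumes "A \<in> carrier_mat n m"
  shows "frob_norm A = L2_set (\<lambda>i. vec_norm (row A i)) {..<n}"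
  using assms unfolding frob_norm_def L2_set_def
  by (simp add: vec_norm_power2 scalar_prod_self_eq_sum_squares)

lemma frob_norm_eq_L2_set_cols:
  assumes "A \<in> carrier_mat n m"
  shows "frob_norm A = L2_set (\<lambda>j. vec_norm (col A j)) {..<m}"
proof -
  have "(\<Sum>i<n. \<Sum>j<m. (A $$ (i, j))^2) = (\<Sum>j<m. \<Sum>i<n. (A $$ (i, j))^2)"
    by (rule sum.swap)
  then show ?thesis
    using assms unfolding frob_norm_def L2_set_def
    by (simp add: vec_norm_power2 scalar_prod_self_eq_sum_squares)
qed

lemma vec_norm_mult_mat_vec_le:
  assumes A: "A \<in> carrier_mat n m" and v: "v \<in> carrier_vec m"
  shows "vec_norm (A *\<^sub>v v) \<le> frob_norm A * vec_norm v"
proof -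
  have "\<bar>(A *\<^sub>v v) $ i\<bar> \<le> vec_norm (row A i) * vec_norm v" if "i < n" for i
    using that A v by (simp add: abs_scalar_prod_le_vec_norm[of _ m])
  then have "L2_set (\<lambda>i. \<bar>(A *\<^sub>v v) $ i\<bar>) {..<n}
      \<le> L2_set (\<lambda>i. vec_norm (row A i) * vec_norm v) {..<n}"
    by (intro L2_set_mono) auto
  moreover have "L2_set (\<lambda>i. \<bar>(A *\<^sub>v v) $ i\<bar>) {..<n} = vec_norm (A *\<^sub>v v)"
    using A by (simp add: vec_norm_eq_L2_set L2_set_def)
  ultimately show ?thesis
    using A v by (simp add: frob_norm_eq_L2_set_rows L2_set_left_distrib vec_norm_nonneg)
qed

lemma vec_norm_mult_mat_vec_diff_le:
  assumes A: "A \<in> carrier_mat n m" and B: "B \<in> carrier_mat n m" and x: "x \<in> carrier_vec m"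
    and AB: "frob_norm (A - B) \<le> e"
  shows "vec_norm (A *\<^sub>v x - B *\<^sub>v x) \<le> e * vec_norm x"
proof -
  have "vec_norm (A *\<^sub>v x - B *\<^sub>v x) \<le> frob_norm (A - B) * vec_norm x"
    using vec_norm_mult_mat_vec_le[OF minus_carrier_mat[OF B, of A] x] A B x
    by (simp add: minus_mult_distrib_mat_vec)
  also have "\<dots> \<le> e * vec_norm x" using AB by (simp add: mult_right_mono vec_norm_nonneg)
  finally show ?thesis .
qed

lemma col_minus_mat:
  assumes "A \<in> carrier_mat n m" "B \<in> carrier_mat n m" "j < m"
  shows "col (A - B) j = col A j - col B j"
  using assms by (intro eq_vecI) auto

lemma frob_norm_le_of_col_bounds:
  assumes A: "A \<in> carrier_mat n m" and B: "B \<in> carrier_mat n' m" and C: "C \<in> carrier_mat n'' m"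
    and \<alpha>: "0 \<le> \<alpha>" and \<beta>: "0 \<le> \<beta>"
    and cols: "\<And>j. j < m \<Longrightarrow> vec_norm (col A j) \<le> \<alpha> * vec_norm (col B j) + \<beta> * vec_norm (col C j)"
  shows "frob_norm A \<le> \<alpha> * frob_norm B + \<beta> * frob_norm C"
proof -
  have "frob_norm A \<le> L2_set (\<lambda>j. \<alpha> * vec_norm (col B j) + \<beta> * vec_norm (col C j)) {..<m}"
    unfolding frob_norm_eq_L2_set_cols[OF A] by (rule L2_set_mono) (auto simp: cols vec_norm_nonneg)
  also have "\<dots> \<le> L2_set (\<lambda>j. \<alpha> * vec_norm (col B j)) {..<m} + L2_set (\<lambda>j. \<beta> * vec_norm (col C j)) {..<m}"
    by (rule L2_set_triangle_ineq)
  also have "\<dots> = \<alpha> * frob_norm B + \<beta> * frob_norm C"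
    using \<alpha> \<beta> by (simp add: frob_norm_eq_L2_set_cols[OF B] frob_norm_eq_L2_set_cols[OF C] L2_set_right_distrib)
  finally show ?thesis .
qed

section \<open>Orthonormal eigenvectors of real symmetric matrices\<close>

lemma eq_mat_by_mult_vec:
  fixes A B :: "'a::comm_ring_1 mat"
  assumes A: "A \<in> carrier_mat n m" and B: "B \<in> carrier_mat n m"
    and eq: "\<And>x. x \<in> carrier_vec m \<Longrightarrow> A *\<^sub>v x = B *\<^sub>v x"
  shows "A = B"
proof (rule eq_matI)
  fix i j assume i: "i < dim_row B" and j: "j < dim_col B"
  have "A $$ (i, j) = (A *\<^sub>v unit_vec m j) $ i" using A B i j by simp
  also have "\<dots> = B $$ (i, j)" using eq[of "unit_vec m j"] B i j by simp
  finally show "A $$ (i, j) = B $$ (i, j)" .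
qed (use A B in auto)

text \<open>Since \<open>2 / 0 = 0\<close>, \<open>reflection_mat 0\<close> is the identity; hence the lemmas below need no
  hypothesis \<open>w \<noteq> 0\<close>.\<close>

definition reflection_mat :: "real vec \<Rightarrow> real mat" where
  "reflection_mat w = mat (dim_vec w) (dim_vec w)
     (\<lambda>(i, j). (if i = j then 1 else 0) - 2 / (w \<bullet> w) * (w $ i * w $ j))"

lemma reflection_mat_carrier: "reflection_mat w \<in> carrier_mat (dim_vec w) (dim_vec w)"
  unfolding reflection_mat_def by simp

lemma transpose_reflection_mat: "transpose_mat (reflection_mat w) = reflection_mat w"
  unfolding reflection_mat_def by (rule eq_matI) auto

lemma reflection_mat_mult_vec:
  assumes x: "x \<in> carrier_vec (dim_vec w)"
  shows "reflection_mat w *\<^sub>v x = x - (2 / (w \<bullet> w) * (w \<bullet> x)) \<cdot>\<^sub>v w"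
proof (rule eq_vecI)
  define c where "c = 2 / (w \<bullet> w)"
  fix i assume "i < dim_vec (x - (2 / (w \<bullet> w) * (w \<bullet> x)) \<cdot>\<^sub>v w)"
  then have i: "i < dim_vec w" by simp
  have "(reflection_mat w *\<^sub>v x) $ i
      = (\<Sum>j<dim_vec w. (if i = j then x $ j else 0) - c * w $ i * (w $ j * x $ j))"
    using i x unfolding reflection_mat_def c_def
    by (auto simp: scalar_prod_def atLeast0LessThan algebra_simps intro!: sum.cong)
  also have "\<dots> = x $ i - c * w $ i * (w \<bullet> x)"
    using i x by (simp add: sum_subtractf sum_distrib_left[symmetric] scalar_prod_def atLeast0LessThan)
  finally show "(reflection_mat w *\<^sub>v x) $ i = (x - (2 / (w \<bullet> w) * (w \<bullet> x)) \<cdot>\<^sub>v w) $ i"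
    using i x by (simp add: c_def)
qed (use x in \<open>simp add: reflection_mat_def\<close>)

lemma reflection_mat_involutive: "reflection_mat w * reflection_mat w = 1\<^sub>m (dim_vec w)"
proof (rule eq_mat_by_mult_vec)
  define n c where "n = dim_vec w" and "c = 2 / (w \<bullet> w)"
  have w: "w \<in> carrier_vec n" and H: "reflection_mat w \<in> carrier_mat n n"
    unfolding n_def by (auto simp: reflection_mat_carrier)
  show "reflection_mat w * reflection_mat w \<in> carrier_mat n n" using H by simp
  show "1\<^sub>m (dim_vec w) \<in> carrier_mat n n" by (simp add: n_def)
  fix x :: "real vec" assume x: "x \<in> carrier_vec n"
  have Hx: "reflection_mat w *\<^sub>v x = x - (c * (w \<bullet> x)) \<cdot>\<^sub>v w"
    using x by (simp add: reflection_mat_mult_vec n_def c_def)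
  have "c * (w \<bullet> (reflection_mat w *\<^sub>v x)) = - (c * (w \<bullet> x))"
    unfolding Hx using w x by (simp add: scalar_prod_minus_distrib c_def field_simps)
  then have "reflection_mat w *\<^sub>v (reflection_mat w *\<^sub>v x) = x"
    using w x H by (simp add: reflection_mat_mult_vec n_def[symmetric] c_def[symmetric] Hx)
      (intro eq_vecI; simp)
  then show "(reflection_mat w * reflection_mat w) *\<^sub>v x = 1\<^sub>m n *\<^sub>v x"
    using H x by simp
qed

lemma reflection_mat_unit_vec_0:
  assumes u: "u \<in> carrier_vec k" and unit: "u \<bullet> u = 1"
  shows "reflection_mat (u - unit_vec k 0) *\<^sub>v unit_vec k 0 = u"
proof -
  define w where "w = u - unit_vec k 0"
  have k: "0 < k" using u unit by (cases k) (auto simp: scalar_prod_def)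
  have w: "w \<in> carrier_vec k" and dim: "dim_vec w = k" unfolding w_def using u by auto
  have ww: "w \<bullet> w = 2 * (1 - u $ 0)"
    using u k unit unfolding w_def
    by (simp add: scalar_prod_minus_distrib minus_scalar_prod_distrib comm_scalar_prod[of _ k])
  have we: "w \<bullet> unit_vec k 0 = u $ 0 - 1"
    using u k unfolding w_def by (simp add: minus_scalar_prod_distrib)
  have "reflection_mat w *\<^sub>v unit_vec k 0 = unit_vec k 0 - (2 / (w \<bullet> w) * (u $ 0 - 1)) \<cdot>\<^sub>v w"
    using reflection_mat_mult_vec[of "unit_vec k 0" w] dim we by simp
  also have "\<dots> = u"
  proof (cases "w \<bullet> w = 0")
    case True
    then have "w = 0\<^sub>v k" using vec_norm_eq_0_iff[OF w] by (simp add: vec_norm_def)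
    moreover have "u = w + unit_vec k 0" unfolding w_def using u by auto
    ultimately show ?thesis by (intro eq_vecI) auto
  next
    case False
    then have "2 / (w \<bullet> w) * (u $ 0 - 1) = -1" unfolding ww by (simp add: field_simps)
    then show ?thesis using u unfolding w_def by (intro eq_vecI) auto
  qed
  finally show ?thesis unfolding w_def .
qed

lemma unit_eigenvector_of_root:
  fixes A :: "real mat"
  assumes A: "A \<in> carrier_mat k k" and e: "e \<in># proots (char_poly A)"
  obtains u where "u \<in> carrier_vec k" "u \<bullet> u = 1" "A *\<^sub>v u = e \<cdot>\<^sub>v u"
proof -
  have "char_poly A \<noteq> 0" using e by auto
  then have "poly (char_poly A) e = 0" using e by simp
  then obtain v where "eigenvector A v e"
    unfolding eigenvalue_root_char_poly[OF A, symmetric] eigenvalue_def by blast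
  then have v: "v \<in> carrier_vec k" "v \<noteq> 0\<^sub>v k" and Av: "A *\<^sub>v v = e \<cdot>\<^sub>v v"
    unfolding eigenvector_def using A by auto
  have pos: "0 < vec_norm v" using v vec_norm_eq_0_iff vec_norm_nonneg by (metis order_le_less)
  define u where "u = (1 / vec_norm v) \<cdot>\<^sub>v v"
  have "u \<bullet> u = (v \<bullet> v) / (vec_norm v)^2"
    unfolding u_def using v by (simp add: power2_eq_square)
  then have "u \<bullet> u = 1" using pos by (simp flip: vec_norm_power2)
  moreover have "A *\<^sub>v u = e \<cdot>\<^sub>v u"
    unfolding u_def using A v Av by (simp add: mult_mat_vec smult_smult_assoc mult.commute)
  moreover have "u \<in> carrier_vec k" unfolding u_def using v by simp
  ultimately show ?thesis using that by blast
qed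

lemma symmetric_mat_block_diag:
  fixes B :: "'a::comm_ring_1 mat"
  assumes B: "B \<in> carrier_mat k k" and sym: "transpose_mat B = B" and k: "0 < k"
    and col0: "B *\<^sub>v unit_vec k 0 = e \<cdot>\<^sub>v unit_vec k 0"
  obtains B' where "B' \<in> carrier_mat (k - 1) (k - 1)" "transpose_mat B' = B'"
    "B = four_block_mat (mat 1 1 (\<lambda>_. e)) (0\<^sub>m 1 (k - 1)) (0\<^sub>m (k - 1) 1) B'"
proof
  define B' where "B' = mat (k - 1) (k - 1) (\<lambda>(i, j). B $$ (Suc i, Suc j))"
  have swap: "B $$ (j, i) = B $$ (i, j)" if "i < k" "j < k" for i j
    using arg_cong[OF sym, of "\<lambda>M. M $$ (i, j)"] B that by simp
  have col: "B $$ (i, 0) = (if i = 0 then e else 0)" if "i < k" for i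
  proof -
    have "B $$ (i, 0) = (B *\<^sub>v unit_vec k 0) $ i" using B that k by simp
    then show ?thesis using col0 that by simp
  qed
  show "B' \<in> carrier_mat (k - 1) (k - 1)" unfolding B'_def by simp
  show "transpose_mat B' = B'" unfolding B'_def by (rule eq_matI) (auto intro: swap)
  show "B = four_block_mat (mat 1 1 (\<lambda>_. e)) (0\<^sub>m 1 (k - 1)) (0\<^sub>m (k - 1) 1) B'"
  proof (rule eq_matI)
    fix i j assume "i < dim_row (four_block_mat (mat 1 1 (\<lambda>_. e)) (0\<^sub>m 1 (k - 1)) (0\<^sub>m (k - 1) 1) B')"
      and "j < dim_col (four_block_mat (mat 1 1 (\<lambda>_. e)) (0\<^sub>m 1 (k - 1)) (0\<^sub>m (k - 1) 1) B')"
    then have i: "i < k" and j: "j < k" using k by (auto simp: B'_def)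
    show "B $$ (i, j) = four_block_mat (mat 1 1 (\<lambda>_. e)) (0\<^sub>m 1 (k - 1)) (0\<^sub>m (k - 1) 1) B' $$ (i, j)"
    proof (cases "i = 0 \<or> j = 0")
      case True
      then show ?thesis using col[OF i] col[OF j] swap[OF i j] i j k by (auto simp: B'_def)
    next
      case False
      then obtain i' j' where "i = Suc i'" "j = Suc j'" by (metis not0_implies_Suc)
      then show ?thesis using i j k by (simp add: B'_def)
    qed
  qed (use B k in \<open>auto simp: B'_def\<close>)
qed

lemma mat_diag_Cons:
  "four_block_mat (mat 1 1 (\<lambda>_. e)) (0\<^sub>m 1 (length L)) (0\<^sub>m (length L) 1) (mat_diag (length L) ((!) L))
    = mat_diag (length (e # L)) ((!) (e # L))"
  by (rule eq_matI) (auto simp: mat_diag_def nth_Cons')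

lemma char_poly_1x1: "char_poly (mat 1 1 (\<lambda>_. e)) = [:- e, 1:]"
  by (simp add: char_poly_defs det_def sign_def)

lemma symmetric_mat_deflation:
  fixes A :: "real mat"
  assumes A: "A \<in> carrier_mat k k" and sym: "transpose_mat A = A"
    and e: "e \<in># proots (char_poly A)"
  obtains H A' where "H \<in> carrier_mat k k" "transpose_mat H = H" "H * H = 1\<^sub>m k"
    "A' \<in> carrier_mat (k - 1) (k - 1)" "transpose_mat A' = A'" "0 < k"
    "H * A * H = four_block_mat (mat 1 1 (\<lambda>_. e)) (0\<^sub>m 1 (k - 1)) (0\<^sub>m (k - 1) 1) A'"
proof -
  obtain u where u: "u \<in> carrier_vec k" "u \<bullet> u = 1" and Au: "A *\<^sub>v u = e \<cdot>\<^sub>v u"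
    using unit_eigenvector_of_root[OF A e] .
  have k: "0 < k" using u by (cases k) (auto simp: scalar_prod_def)
  define H where "H = reflection_mat (u - unit_vec k 0)"
  have H: "H \<in> carrier_mat k k" "transpose_mat H = H" "H * H = 1\<^sub>m k"
    and He0: "H *\<^sub>v unit_vec k 0 = u"
    unfolding H_def using reflection_mat_carrier[of "u - unit_vec k 0"] transpose_reflection_mat
      reflection_mat_involutive[of "u - unit_vec k 0"] reflection_mat_unit_vec_0[OF u] u(1) by auto
  have B: "H * A * H \<in> carrier_mat k k" using A H by simp
  have "transpose_mat (H * A * H) = H * A * H"
    using A H sym by (simp add: transpose_mult[of _ k k _ k] assoc_mult_mat[of _ k k _ k _ k])
  moreover have "(H * A * H) *\<^sub>v unit_vec k 0 = e \<cdot>\<^sub>v unit_vec k 0"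
  proof -
    have "H *\<^sub>v u = unit_vec k 0"
      using H He0 by (metis assoc_mult_mat_vec one_mult_mat_vec unit_vec_carrier)
    moreover have "(H * A * H) *\<^sub>v unit_vec k 0 = H *\<^sub>v (A *\<^sub>v (H *\<^sub>v unit_vec k 0))"
      using A H by (simp add: assoc_mult_mat_vec[of _ k k _ k])
    ultimately show ?thesis using H u Au He0 by (simp add: mult_mat_vec)
  qed
  ultimately obtain A' where "A' \<in> carrier_mat (k - 1) (k - 1)" "transpose_mat A' = A'"
    "H * A * H = four_block_mat (mat 1 1 (\<lambda>_. e)) (0\<^sub>m 1 (k - 1)) (0\<^sub>m (k - 1) 1) A'"
    using symmetric_mat_block_diag[OF B _ k] by blast
  then show ?thesis using that H k by blast
qed

lemma orthonormal_eigenvectors_extend: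
  fixes A H A' U' :: "'a::comm_ring_1 mat"
  assumes A: "A \<in> carrier_mat k k" and k: "0 < k"
    and H: "H \<in> carrier_mat k k" "transpose_mat H = H" "H * H = 1\<^sub>m k"
    and A': "A' \<in> carrier_mat (k - 1) (k - 1)"
    and HAH: "H * A * H = four_block_mat (mat 1 1 (\<lambda>_. e)) (0\<^sub>m 1 (k - 1)) (0\<^sub>m (k - 1) 1) A'"
    and U': "U' \<in> carrier_mat (k - 1) l" "transpose_mat U' * U' = 1\<^sub>m l" "A' * U' = U' * D"
    and D: "D \<in> carrier_mat l l"
  defines "J \<equiv> four_block_mat (1\<^sub>m 1) (0\<^sub>m 1 l) (0\<^sub>m (k - 1) 1) U'"
  shows "H * J \<in> carrier_mat k (Suc l)" "transpose_mat (H * J) * (H * J) = 1\<^sub>m (Suc l)"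
    "A * (H * J) = (H * J) * four_block_mat (mat 1 1 (\<lambda>_. e)) (0\<^sub>m 1 l) (0\<^sub>m l 1) D"
proof -
  have J: "J \<in> carrier_mat k (Suc l)" unfolding J_def using U' k by auto
  show "H * J \<in> carrier_mat k (Suc l)" using H J by simp
  have HH: "H * (H * X) = X" if "X \<in> carrier_mat k n" for X n
    using H that by (metis assoc_mult_mat left_mult_one_mat)
  have "transpose_mat (H * J) * (H * J) = transpose_mat J * J"
    using H J HH[OF J] by (simp add: transpose_mult[of _ k k _ "Suc l"] assoc_mult_mat[of _ _ k _ k _ "Suc l"])
  also have "\<dots> = four_block_mat (1\<^sub>m 1) (0\<^sub>m 1 l) (0\<^sub>m l 1) (transpose_mat U' * U')"
  proof -
    have "transpose_mat J = four_block_mat (1\<^sub>m 1) (0\<^sub>m 1 (k - 1)) (0\<^sub>m l 1) (transpose_mat U')"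
      unfolding J_def using U' by (subst transpose_four_block_mat[of _ 1 1 _ l _ "k - 1"]) auto
    moreover have "four_block_mat (1\<^sub>m 1) (0\<^sub>m 1 (k - 1)) (0\<^sub>m l 1) (transpose_mat U') * J
        = four_block_mat (1\<^sub>m 1) (0\<^sub>m 1 l) (0\<^sub>m l 1) (transpose_mat U' * U')"
      unfolding J_def using U' by (subst mult_four_block_mat[of _ 1 1 _ "k - 1" _ l _ _ 1 _ l]) auto
    ultimately show ?thesis by simp
  qed
  also have "\<dots> = 1\<^sub>m (Suc l)" using U' by simp
  finally show "transpose_mat (H * J) * (H * J) = 1\<^sub>m (Suc l)" .
  have "A * (H * J) = H * ((H * A * H) * J)"
    using A H J HH[of "A * (H * J)" "Suc l"] by (simp add: assoc_mult_mat[of _ k k _ k _ _])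
  also have "(H * A * H) * J = J * four_block_mat (mat 1 1 (\<lambda>_. e)) (0\<^sub>m 1 l) (0\<^sub>m l 1) D"
  proof -
    have "(H * A * H) * J = four_block_mat (mat 1 1 (\<lambda>_. e)) (0\<^sub>m 1 l) (0\<^sub>m (k - 1) 1) (A' * U')"
      unfolding HAH J_def using U'(1) A'
      by (subst mult_four_block_mat[of _ 1 1 _ "k - 1" _ "k - 1" _ _ 1 _ l]) auto
    moreover have "J * four_block_mat (mat 1 1 (\<lambda>_. e)) (0\<^sub>m 1 l) (0\<^sub>m l 1) D
        = four_block_mat (mat 1 1 (\<lambda>_. e)) (0\<^sub>m 1 l) (0\<^sub>m (k - 1) 1) (U' * D)"
      unfolding J_def using U' D
      by (subst mult_four_block_mat[of _ 1 1 _ l _ "k - 1" _ _ 1 _ l]) auto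
    ultimately show ?thesis using U' by simp
  qed
  finally show "A * (H * J) = (H * J) * four_block_mat (mat 1 1 (\<lambda>_. e)) (0\<^sub>m 1 l) (0\<^sub>m l 1) D"
    using assoc_mult_mat[OF H(1) J, of _ "Suc l"] four_block_carrier_mat[of _ 1 1 D l l] D by simp
qed

lemma symmetric_mat_orthonormal_eigenvectors:
  fixes A :: "real mat"
  assumes "A \<in> carrier_mat k k" "transpose_mat A = A" "mset L \<subseteq># proots (char_poly A)"
  shows "\<exists>U \<in> carrier_mat k (length L). transpose_mat U * U = 1\<^sub>m (length L)
           \<and> A * U = U * mat_diag (length L) ((!) L)"
  using assms
proof (induction L arbitrary: k A)
  case Nil
  show ?case by (intro bexI[of _ "0\<^sub>m k 0"] conjI eq_matI) (use Nil in \<open>auto simp: mat_diag_def\<close>)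
next
  case (Cons e L k A)
  note A = Cons.prems(1)
  have e: "e \<in># proots (char_poly A)" using Cons.prems(3) by (simp add: mset_subset_eq_insertD)
  obtain H A' where H: "H \<in> carrier_mat k k" "transpose_mat H = H" "H * H = 1\<^sub>m k"
    and A': "A' \<in> carrier_mat (k - 1) (k - 1)" "transpose_mat A' = A'" and k: "0 < k"
    and HAH: "H * A * H = four_block_mat (mat 1 1 (\<lambda>_. e)) (0\<^sub>m 1 (k - 1)) (0\<^sub>m (k - 1) 1) A'"
    using symmetric_mat_deflation[OF Cons.prems(1,2) e] .
  have "similar_mat A (H * A * H)"
  proof (rule similar_matI)
    show "A = H * (H * A * H) * H"
      using A H by (metis assoc_mult_mat left_mult_one_mat right_mult_one_mat mult_carrier_mat)
  qed (use A H in auto)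
  then have "char_poly A = char_poly (H * A * H)" by (rule char_poly_similar)
  also have "\<dots> = char_poly (mat 1 1 (\<lambda>_. e)) * char_poly A'"
    unfolding HAH by (rule char_poly_four_block_zeros_col) (use A' in auto)
  finally have cp: "char_poly A = [:- e, 1:] * char_poly A'" by (simp only: char_poly_1x1)
  have "char_poly A' \<noteq> 0" using degree_monic_char_poly[OF A'(1)] by auto
  then have "proots (char_poly A) = proots [:- e, 1:] + proots (char_poly A')"
    unfolding cp by (intro proots_mult) auto
  then have "proots (char_poly A) = add_mset e (proots (char_poly A'))"
    using proots_linear_factor[of "- e"] by simp
  then have "mset L \<subseteq># proots (char_poly A')" using Cons.prems(3) by simp
  then obtain U' where U': "U' \<in> carrier_mat (k - 1) (length L)"
    "transpose_mat U' * U' = 1\<^sub>m (length L)" "A' * U' = U' * mat_diag (length L) ((!) L)"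
    using Cons.IH[OF A'(1,2)] by blast
  from orthonormal_eigenvectors_extend[OF A k H A'(1) HAH U' mat_diag_dim] show ?case
    unfolding mat_diag_Cons length_Cons by blast
qed

lemma scalar_prod_mult_mat_vec_self:
  fixes M :: "'a::comm_ring_1 mat"
  assumes M: "M \<in> carrier_mat n m" and x: "x \<in> carrier_vec m"
  shows "(M *\<^sub>v x) \<bullet> (M *\<^sub>v x) = ((transpose_mat M * M) *\<^sub>v x) \<bullet> x"
  using transpose_vec_mult_scalar[OF M x, of "M *\<^sub>v x"] M x by (simp add: assoc_mult_mat_vec[of _ m n])

lemma mat_diag_mult_vec:
  fixes f :: "nat \<Rightarrow> 'a::comm_ring_1"
  assumes "y \<in> carrier_vec p"
  shows "mat_diag p f *\<^sub>v y = vec p (\<lambda>i. f i * y $ i)"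
proof (rule eq_vecI)
  fix i assume "i < dim_vec (vec p (\<lambda>i. f i * y $ i))"
  then have i: "i < p" by simp
  have "(mat_diag p f *\<^sub>v y) $ i = (\<Sum>j\<in>{0..<p}. (if i = j then f j else 0) * y $ j)"
    using i assms by (simp add: mat_diag_def scalar_prod_def)
  also have "\<dots> = f i * y $ i"
    using i by (simp add: if_distrib[of "\<lambda>a. a * _"] cong: if_cong)
  finally show "(mat_diag p f *\<^sub>v y) $ i = vec p (\<lambda>i. f i * y $ i) $ i" using i by simp
qed (simp add: mat_diag_def)

lemma vec_norm_mult_orthonormal_cols:
  assumes U: "U \<in> carrier_mat m p" and orth: "transpose_mat U * U = 1\<^sub>m p" and y: "y \<in> carrier_vec p"
  shows "vec_norm (U *\<^sub>v y) = vec_norm y"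
  using scalar_prod_mult_mat_vec_self[OF U y] orth y by (simp add: vec_norm_def)

lemma vec_norm_mult_eigenvectors_ge:
  fixes S U :: "real mat"
  assumes S: "S \<in> carrier_mat n m" and U: "U \<in> carrier_mat m p"
    and orth: "transpose_mat U * U = 1\<^sub>m p"
    and eigen: "(transpose_mat S * S) * U = U * mat_diag p f"
    and large: "\<And>i. i < p \<Longrightarrow> t^2 \<le> f i" and t: "0 \<le> t"
    and y: "y \<in> carrier_vec p"
  shows "t * vec_norm y \<le> vec_norm (S *\<^sub>v (U *\<^sub>v y))"
proof -
  have SU: "S * U \<in> carrier_mat n p" using S U by simp
  have "transpose_mat (S * U) * (S * U) = transpose_mat U * ((transpose_mat S * S) * U)"
    using S U by (simp add: transpose_mult[OF S U] assoc_mult_mat[of _ p m _ n _ p]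
        assoc_mult_mat[of _ m n _ m _ p])
  also have "\<dots> = mat_diag p f"
    unfolding eigen using U orth assoc_mult_mat[of "transpose_mat U" p m U p "mat_diag p f" p]
    by (metis left_mult_one_mat mat_diag_dim transpose_carrier_mat)
  finally have D: "transpose_mat (S * U) * (S * U) = mat_diag p f" .
  have "(vec_norm (S *\<^sub>v (U *\<^sub>v y)))^2 = ((S * U) *\<^sub>v y) \<bullet> ((S * U) *\<^sub>v y)"
    using S U y by (simp add: vec_norm_power2 assoc_mult_mat_vec[of _ n m _ p])
  also have "\<dots> = (mat_diag p f *\<^sub>v y) \<bullet> y"
    using scalar_prod_mult_mat_vec_self[OF SU y] D by simp
  also have "\<dots> = (\<Sum>i<p. f i * (y $ i)^2)"
    using y by (simp add: mat_diag_mult_vec scalar_prod_def atLeast0LessThan power2_eq_square mult.assoc)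
  also have "\<dots> \<ge> (\<Sum>i<p. t^2 * (y $ i)^2)"
    by (intro sum_mono mult_right_mono large) auto
  finally have "(t * vec_norm y)^2 \<le> (vec_norm (S *\<^sub>v (U *\<^sub>v y)))^2"
    using y by (simp add: power_mult_distrib vec_norm_power2 scalar_prod_self_eq_sum_squares sum_distrib_left)
  then show ?thesis by (rule power2_le_imp_le) (use vec_norm_nonneg in simp)
qed

section \<open>Singular values\<close>

lemma sorted_list_of_multiset_image_sqrt:
  "sorted_list_of_multiset (image_mset sqrt R) = map sqrt (sorted_list_of_multiset R)"
proof -
  have "sorted (map sqrt (sorted_list_of_multiset R))"
    by (auto simp: sorted_map intro: sorted_wrt_mono_rel[OF _ sorted_sorted_list_of_multiset])
  moreover have "image_mset sqrt R = mset (map sqrt (sorted_list_of_multiset R))" by simp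
  ultimately show ?thesis by (metis sorted_list_of_multiset_mset sorted_sort_id)
qed

lemma sigma_pos_obtains_large_roots:
  fixes S :: "real mat"
  assumes pos: "0 < sigma p S"
  obtains L where "length L = p" "mset L \<subseteq># proots (char_poly (transpose_mat S * S))"
    "\<And>x. x \<in> set L \<Longrightarrow> (sigma p S)^2 \<le> x"
proof
  define sl where "sl = rev (sorted_list_of_multiset (proots (char_poly (transpose_mat S * S))))"
  have "singular_values S = map sqrt sl"
    unfolding singular_values_def sl_def sorted_list_of_multiset_image_sqrt by (simp add: rev_map)
  then have p: "1 \<le> p" "p \<le> length sl" and sigma: "sigma p S = sqrt (sl ! (p - 1))"
    using pos unfolding sigma_def by (auto split: if_splits)
  show "length (take p sl) = p" using p by simp
  show "mset (take p sl) \<subseteq># proots (char_poly (transpose_mat S * S))"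
    by (metis append_take_drop_id mset_append mset_subset_eq_add_left mset_rev
        mset_sorted_list_of_multiset sl_def)
  fix x assume "x \<in> set (take p sl)"
  then obtain i where i: "i < p" and x: "x = sl ! i" using p by (auto simp: in_set_conv_nth)
  have "sorted_wrt (\<ge>) sl" unfolding sl_def by (simp add: sorted_wrt_rev)
  then have "sl ! (p - 1) \<le> x"
    using i p x by (cases "i = p - 1") (auto intro: sorted_wrt_nth_less)
  moreover have "(sigma p S)^2 = sl ! (p - 1)" using pos sigma by (metis real_sqrt_gt_0_iff real_sqrt_pow2 less_imp_le)
  ultimately show "(sigma p S)^2 \<le> x" by simp
qed

lemma sigma_pos_obtains_isometry:
  fixes S :: "real mat"
  assumes S: "S \<in> carrier_mat n m" and pos: "0 < sigma p S"
  obtains U where "U \<in> carrier_mat m p"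
    "\<And>y. y \<in> carrier_vec p \<Longrightarrow> vec_norm (U *\<^sub>v y) = vec_norm y"
    "\<And>y. y \<in> carrier_vec p \<Longrightarrow> sigma p S * vec_norm y \<le> vec_norm (S *\<^sub>v (U *\<^sub>v y))"
proof -
  obtain L where L: "length L = p" "mset L \<subseteq># proots (char_poly (transpose_mat S * S))"
    and large: "\<And>x. x \<in> set L \<Longrightarrow> (sigma p S)^2 \<le> x"
    using sigma_pos_obtains_large_roots[OF pos] by metis
  have "transpose_mat S * S \<in> carrier_mat m m" "transpose_mat (transpose_mat S * S) = transpose_mat S * S"
    using S by (auto simp: transpose_mult[of _ m n S m])
  then obtain U where U: "U \<in> carrier_mat m p" "transpose_mat U * U = 1\<^sub>m p"
    "(transpose_mat S * S) * U = U * mat_diag p ((!) L)"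
    using symmetric_mat_orthonormal_eigenvectors[OF _ _ L(2)] L(1) by blast
  show ?thesis
  proof (rule that[OF U(1)])
    show "vec_norm (U *\<^sub>v y) = vec_norm y" if "y \<in> carrier_vec p" for y
      using vec_norm_mult_orthonormal_cols[OF U(1,2) that] .
    show "sigma p S * vec_norm y \<le> vec_norm (S *\<^sub>v (U *\<^sub>v y))" if "y \<in> carrier_vec p" for y
      using vec_norm_mult_eigenvectors_ge[OF S U _ _ that] large L(1) pos by (simp add: less_imp_le)
  qed
qed

section \<open>Rank and column ranges\<close>

lemma mult_mat_vec_unit_vec:
  fixes A :: "'a::semiring_1 mat"
  assumes A: "A \<in> carrier_mat n m" and j: "j < m"
  shows "A *\<^sub>v unit_vec m j = col A j"
  by (rule eq_vecI) (use A j in auto)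

lemma (in vec_space) rank_mult_le:
  assumes T: "T \<in> carrier_mat n nc" and Y: "Y \<in> carrier_mat nc r"
  shows "rank (T * Y) \<le> rank T"
proof -
  define W where "W = span (set (cols T))"
  have TY: "T * Y \<in> carrier_mat n r" using T Y by simp
  have sub: "span (set (cols (T * Y))) \<subseteq> W"
  proof
    fix x assume "x \<in> span (set (cols (T * Y)))"
    then obtain z where z: "z \<in> carrier_vec r" and x: "x = (T * Y) *\<^sub>v z"
      using col_space_eq[OF TY] TY unfolding col_space_def by auto
    have "x = T *\<^sub>v (Y *\<^sub>v z)" unfolding x using T Y z by simp
    then show "x \<in> W"
      using col_space_eq[OF T] T Y z unfolding W_def col_space_def by auto
  qed
  have W: "VectorSpace.subspace class_ring W V"
    unfolding W_def using T by (metis cols_dim carrier_matD(1) span_is_subspace)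
  have "VectorSpace.subspace class_ring (span (set (cols (T * Y)))) V"
    using TY by (metis cols_dim carrier_matD(1) span_is_subspace)
  then have "VectorSpace.subspace class_ring (span (set (cols (T * Y)))) (vs W)"
    using nested_subspaces[OF W _ sub] by blast
  moreover have "vectorspace.fin_dim class_ring (vs W)"
    unfolding W_def using T fin_dim_span_cols by blast
  ultimately show ?thesis
    unfolding rank_def W_def[symmetric]
    using vectorspace.subspace_dim[OF subspace_is_vs[OF W]] TY fin_dim_span_cols by auto
qed

lemma (in vec_space) rank_eq_dim_col_if_injective:
  assumes G: "G \<in> carrier_mat n k"
    and inj: "\<And>v. v \<in> carrier_vec k \<Longrightarrow> G *\<^sub>v v = 0\<^sub>v n \<Longrightarrow> v = 0\<^sub>v k"
  shows "rank G = k"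
proof -
  have "distinct (cols G)"
  proof (rule ccontr)
    assume "\<not> distinct (cols G)"
    then obtain i j where ij: "i < k" "j < k" "i \<noteq> j" "col G i = col G j"
      using G by (auto simp: distinct_conv_nth)
    define w :: "'a vec" where "w = unit_vec k i - unit_vec k j"
    have "w \<in> carrier_vec k" unfolding w_def by simp
    moreover have "G *\<^sub>v w = 0\<^sub>v n"
      unfolding w_def using G ij by (simp add: mult_minus_distrib_mat_vec mult_mat_vec_unit_vec)
    ultimately have "w = 0\<^sub>v k" by (rule inj)
    then have "w $ i = 0" using ij by simp
    then show False using ij unfolding w_def by simp
  qed
  moreover have "lin_indpt (set (cols G))"
  proof
    assume "lin_dep (set (cols G))"
    then obtain v where "v \<in> carrier_vec k" "v \<noteq> 0\<^sub>v k" "G *\<^sub>v v = 0\<^sub>v n"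
      using lin_depE[OF G _ \<open>distinct (cols G)\<close>] by blast
    then show False using inj by blast
  qed
  ultimately show ?thesis using lin_indpt_full_rank[OF G] by blast
qed

lemma mult_mat_vec_append_col:
  fixes X :: "'a::comm_ring_1 mat"
  assumes X: "X \<in> carrier_mat C p" and z: "z \<in> carrier_vec C" and v: "v \<in> carrier_vec (Suc p)"
  shows "mat C (Suc p) (\<lambda>(i, j). if j < p then X $$ (i, j) else z $ i) *\<^sub>v v
    = X *\<^sub>v vec p (($) v) + v $ p \<cdot>\<^sub>v z"
proof (rule eq_vecI)
  fix i assume "i < dim_vec (X *\<^sub>v vec p (($) v) + v $ p \<cdot>\<^sub>v z)"
  then have i: "i < C" using z by simp
  then have "(mat C (Suc p) (\<lambda>(i, j). if j < p then X $$ (i, j) else z $ i) *\<^sub>v v) $ i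
      = (\<Sum>j<p. X $$ (i, j) * v $ j) + z $ i * v $ p"
    using v by (simp add: scalar_prod_def atLeast0LessThan sum.lessThan_Suc cong: if_cong)
  also have "\<dots> = (X *\<^sub>v vec p (($) v) + v $ p \<cdot>\<^sub>v z) $ i"
    using X z i by (auto simp: scalar_prod_def atLeast0LessThan mult.commute)
  finally show "(mat C (Suc p) (\<lambda>(i, j). if j < p then X $$ (i, j) else z $ i) *\<^sub>v v) $ i
      = (X *\<^sub>v vec p (($) v) + v $ p \<cdot>\<^sub>v z) $ i" .
qed (use z in simp)

text \<open>The \<open>p + 1\<close> columns of \<open>[X | z]\<close> are mapped by \<open>T\<close> into a space of dimension at most \<open>p\<close>,
  so some nontrivial combination of them is killed; injectivity of \<open>T * X\<close> forces the coefficient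
  of \<open>z\<close> to be nonzero.\<close>

lemma mult_mat_vec_in_range_of_injective_factor:
  fixes T X :: "'a::field mat"
  assumes T: "T \<in> carrier_mat N C" and rank: "vec_space.rank N T \<le> p"
    and X: "X \<in> carrier_mat C p"
    and inj: "\<And>y. y \<in> carrier_vec p \<Longrightarrow> (T * X) *\<^sub>v y = 0\<^sub>v N \<Longrightarrow> y = 0\<^sub>v p"
    and z: "z \<in> carrier_vec C"
  obtains y where "y \<in> carrier_vec p" "T *\<^sub>v z = (T * X) *\<^sub>v y"
proof -
  define Y where "Y = mat C (Suc p) (\<lambda>(i, j). if j < p then X $$ (i, j) else z $ i)"
  have Y: "Y \<in> carrier_mat C (Suc p)" unfolding Y_def by simp
  have "vec_space.rank N (T * Y) \<le> p" using vec_space.rank_mult_le[OF T Y] rank by simp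
  then obtain v where v: "v \<in> carrier_vec (Suc p)" "v \<noteq> 0\<^sub>v (Suc p)" and TYv: "(T * Y) *\<^sub>v v = 0\<^sub>v N"
    using vec_space.rank_eq_dim_col_if_injective[of "T * Y" N "Suc p"] T Y by fastforce
  define w where "w = vec p (($) v)"
  have w: "w \<in> carrier_vec p" unfolding w_def by simp
  have comb: "(T * X) *\<^sub>v w + v $ p \<cdot>\<^sub>v (T *\<^sub>v z) = 0\<^sub>v N"
    using TYv T X Y v w z mult_mat_vec_append_col[OF X z v(1), folded Y_def w_def]
    by (simp add: mult_add_distrib_mat_vec mult_mat_vec assoc_mult_mat_vec[of _ N C _ "Suc p"])
  have entry: "((T * X) *\<^sub>v w) $ i + v $ p * (T *\<^sub>v z) $ i = 0" if "i < N" for i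
    using arg_cong[OF comb, of "\<lambda>u. u $ i"] that T X by simp
  have "v $ p \<noteq> 0"
  proof
    assume "v $ p = 0"
    then have "(T * X) *\<^sub>v w = 0\<^sub>v N" using entry T X by (intro eq_vecI) auto
    then have "w = 0\<^sub>v p" using inj w by blast
    then have "\<forall>i<p. v $ i = 0" unfolding w_def by (metis index_vec index_zero_vec(1))
    then have "v = 0\<^sub>v (Suc p)" using \<open>v $ p = 0\<close> v by (intro eq_vecI) (auto simp: less_Suc_eq)
    then show False using v by simp
  qed
  have "T *\<^sub>v z = (T * X) *\<^sub>v ((- 1 / v $ p) \<cdot>\<^sub>v w)"
  proof (rule eq_vecI)
    fix i assume "i < dim_vec ((T * X) *\<^sub>v ((- 1 / v $ p) \<cdot>\<^sub>v w))"
    then have i: "i < N" using T by simp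
    from entry[OF i] show "(T *\<^sub>v z) $ i = ((T * X) *\<^sub>v ((- 1 / v $ p) \<cdot>\<^sub>v w)) $ i"
      using \<open>v $ p \<noteq> 0\<close> i T X w by (simp add: mult_mat_vec field_simps eq_neg_iff_add_eq_0 add.commute)
  qed (use T X in simp)
  moreover have "(- 1 / v $ p) \<cdot>\<^sub>v w \<in> carrier_vec p" using w by simp
  ultimately show ?thesis using that by blast
qed

lemma zero_vec_add_eq_append: "0\<^sub>v (n1 + n2) = (0\<^sub>v n1 :: 'a::zero vec) @\<^sub>v 0\<^sub>v n2"
  by (rule eq_vecI) auto

lemma mult_mat_vec_zero:
  fixes B :: "'a::comm_semiring_0 mat"
  shows "B \<in> carrier_mat n m \<Longrightarrow> B *\<^sub>v 0\<^sub>v m = 0\<^sub>v n"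
  by (intro eq_vecI) auto

lemma four_block_mat_cols_in_range:
  fixes A B C D U :: "real mat"
  assumes A: "A \<in> carrier_mat n1 m1" and B: "B \<in> carrier_mat n1 m2"
    and C: "C \<in> carrier_mat n2 m1" and D: "D \<in> carrier_mat n2 m2"
    and U: "U \<in> carrier_mat m1 p"
    and rank: "mat_rank (four_block_mat A B C D) \<le> p"
    and inj: "\<And>y. y \<in> carrier_vec p \<Longrightarrow> A *\<^sub>v (U *\<^sub>v y) = 0\<^sub>v n1 \<Longrightarrow> y = 0\<^sub>v p"
  obtains Y where "\<And>j. j < m2 \<Longrightarrow> Y j \<in> carrier_vec p"
    "\<And>j. j < m2 \<Longrightarrow> col B j = A *\<^sub>v (U *\<^sub>v Y j)"
    "\<And>j. j < m2 \<Longrightarrow> col D j = C *\<^sub>v (U *\<^sub>v Y j)"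
proof -
  define T where "T = four_block_mat A B C D"
  define X where "X = U @\<^sub>r 0\<^sub>m m2 p"
  have T: "T \<in> carrier_mat (n1 + n2) (m1 + m2)" unfolding T_def using A D by simp
  have X: "X \<in> carrier_mat (m1 + m2) p" unfolding X_def using U by auto
  have TX: "(T * X) *\<^sub>v y = (A *\<^sub>v (U *\<^sub>v y)) @\<^sub>v (C *\<^sub>v (U *\<^sub>v y))" if y: "y \<in> carrier_vec p" for y
  proof -
    have "X *\<^sub>v y = (U *\<^sub>v y) @\<^sub>v 0\<^sub>v m2"
      unfolding X_def using mat_mult_append[OF U zero_carrier_mat y] y by auto
    then have "(T * X) *\<^sub>v y = T *\<^sub>v ((U *\<^sub>v y) @\<^sub>v 0\<^sub>v m2)" using T X y by simp
    also have "\<dots> = (A *\<^sub>v (U *\<^sub>v y) + B *\<^sub>v 0\<^sub>v m2) @\<^sub>v (C *\<^sub>v (U *\<^sub>v y) + D *\<^sub>v 0\<^sub>v m2)"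
      unfolding T_def by (rule four_block_mat_mult_vec[OF A B C D]) (use U y in auto)
    finally show ?thesis using A B C D U y by (simp add: mult_mat_vec_zero)
  qed
  have inj_TX: "y = 0\<^sub>v p" if "y \<in> carrier_vec p" "(T * X) *\<^sub>v y = 0\<^sub>v (n1 + n2)" for y
  proof (rule inj[OF that(1)])
    have "(A *\<^sub>v (U *\<^sub>v y)) @\<^sub>v (C *\<^sub>v (U *\<^sub>v y)) = 0\<^sub>v n1 @\<^sub>v 0\<^sub>v n2"
      using that TX by (simp add: zero_vec_add_eq_append)
    moreover have "A *\<^sub>v (U *\<^sub>v y) \<in> carrier_vec n1" using A U that(1) by simp
    ultimately show "A *\<^sub>v (U *\<^sub>v y) = 0\<^sub>v n1" using append_vec_eq[of _ n1 "0\<^sub>v n1"] by simp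
  qed
  have "\<exists>y \<in> carrier_vec p. col B j = A *\<^sub>v (U *\<^sub>v y) \<and> col D j = C *\<^sub>v (U *\<^sub>v y)" if j: "j < m2" for j
  proof -
    define z :: "real vec" where "z = 0\<^sub>v m1 @\<^sub>v unit_vec m2 j"
    have "T *\<^sub>v z = (A *\<^sub>v 0\<^sub>v m1 + B *\<^sub>v unit_vec m2 j) @\<^sub>v (C *\<^sub>v 0\<^sub>v m1 + D *\<^sub>v unit_vec m2 j)"
      unfolding z_def T_def by (rule four_block_mat_mult_vec[OF A B C D]) auto
    then have "T *\<^sub>v z = col B j @\<^sub>v col D j"
      using A B C D j by (simp add: mult_mat_vec_zero mult_mat_vec_unit_vec)
    moreover have "vec_space.rank (n1 + n2) T \<le> p"
      using rank A D unfolding mat_rank_def T_def by simp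
    moreover have "z \<in> carrier_vec (m1 + m2)" unfolding z_def by simp
    ultimately obtain y where y: "y \<in> carrier_vec p" "col B j @\<^sub>v col D j = (T * X) *\<^sub>v y"
      using mult_mat_vec_in_range_of_injective_factor[OF T _ X inj_TX] by metis
    moreover have "col B j \<in> carrier_vec n1" "A *\<^sub>v (U *\<^sub>v y) \<in> carrier_vec n1"
      using A B U y(1) by auto
    ultimately show ?thesis using TX[OF y(1)] append_vec_eq by metis
  qed
  then obtain Y where "\<forall>j<m2. Y j \<in> carrier_vec p \<and> col B j = A *\<^sub>v (U *\<^sub>v Y j)
      \<and> col D j = C *\<^sub>v (U *\<^sub>v Y j)" by metis
  then show ?thesis using that by blast
qed

section \<open>Perturbation bounds\<close>

lemma vec_norm_mult_mat_vec_le_perturbed: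
  assumes S: "S \<in> carrier_mat n m" and H: "H \<in> carrier_mat n m" and x: "x \<in> carrier_vec m"
    and HS: "frob_norm (H - S) \<le> \<epsilon>"
  shows "vec_norm (S *\<^sub>v x) \<le> vec_norm (H *\<^sub>v x) + \<epsilon> * vec_norm x"
proof -
  have "vec_norm (S *\<^sub>v x) \<le> vec_norm (H *\<^sub>v x) + vec_norm (S *\<^sub>v x - H *\<^sub>v x)"
    using vec_norm_le_add_diff[of _ n] S H x by simp
  also have "vec_norm (S *\<^sub>v x - H *\<^sub>v x) = vec_norm (H *\<^sub>v x - S *\<^sub>v x)"
    using S H x by (intro vec_norm_minus_commute[of _ n]) auto
  also have "\<dots> \<le> \<epsilon> * vec_norm x" by (rule vec_norm_mult_mat_vec_diff_le[OF H S x HS])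
  finally show ?thesis by simp
qed

lemma vec_norm_mult_mat_vec_diff_le_perturbed:
  assumes S: "S \<in> carrier_mat n m" and H: "H \<in> carrier_mat n m"
    and x: "x \<in> carrier_vec m" and x': "x' \<in> carrier_vec m"
    and HS: "frob_norm (H - S) \<le> \<epsilon>" and SM: "frob_norm S \<le> M"
  shows "vec_norm (H *\<^sub>v x' - S *\<^sub>v x) \<le> \<epsilon> * vec_norm x' + M * vec_norm (x' - x)"
proof -
  have "H *\<^sub>v x' - S *\<^sub>v x = (H *\<^sub>v x' - S *\<^sub>v x') + S *\<^sub>v (x' - x)"
    using H S x x' by (simp add: mult_minus_distrib_mat_vec) (intro eq_vecI; simp)
  then have "vec_norm (H *\<^sub>v x' - S *\<^sub>v x) \<le> vec_norm (H *\<^sub>v x' - S *\<^sub>v x') + vec_norm (S *\<^sub>v (x' - x))"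
    using vec_norm_add_le[of _ n] H S x x' by simp
  also have "\<dots> \<le> \<epsilon> * vec_norm x' + M * vec_norm (x' - x)"
  proof (rule add_mono)
    show "vec_norm (H *\<^sub>v x' - S *\<^sub>v x') \<le> \<epsilon> * vec_norm x'"
      by (rule vec_norm_mult_mat_vec_diff_le[OF H S x' HS])
    have "vec_norm (S *\<^sub>v (x' - x)) \<le> frob_norm S * vec_norm (x' - x)"
      using vec_norm_mult_mat_vec_le[OF S, of "x' - x"] x x' by simp
    also have "\<dots> \<le> M * vec_norm (x' - x)" using SM by (rule mult_right_mono) (rule vec_norm_nonneg)
    finally show "vec_norm (S *\<^sub>v (x' - x)) \<le> M * vec_norm (x' - x)" .
  qed
  finally show ?thesis .
qed

lemma injective_of_lower_bound:
  assumes c: "0 < c" and below: "\<And>y. y \<in> carrier_vec p \<Longrightarrow> c * vec_norm y \<le> vec_norm (f y)"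
    and y: "y \<in> carrier_vec p" and fy: "f y = 0\<^sub>v n"
  shows "y = 0\<^sub>v p"
proof -
  have "c * vec_norm y \<le> 0" using below[OF y] fy by simp
  then have "vec_norm y = 0" using c vec_norm_nonneg[of y] by (simp add: mult_le_0_iff)
  then show ?thesis using vec_norm_eq_0_iff[OF y] by simp
qed

lemma lower_bound_le_frob_norm:
  fixes S U :: "real mat"
  assumes S: "S \<in> carrier_mat n m" and U: "U \<in> carrier_mat m p" and p: "0 < p"
    and isometry: "\<And>v. v \<in> carrier_vec p \<Longrightarrow> vec_norm (U *\<^sub>v v) = vec_norm v"
    and below: "\<And>v. v \<in> carrier_vec p \<Longrightarrow> \<sigma> * vec_norm v \<le> vec_norm (S *\<^sub>v (U *\<^sub>v v))"
  shows "\<sigma> \<le> frob_norm S"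
proof -
  define v :: "real vec" where "v = unit_vec p 0"
  have v: "v \<in> carrier_vec p" and "vec_norm v = 1" unfolding v_def vec_norm_def using p by auto
  then show ?thesis
    using below[OF v] vec_norm_mult_mat_vec_le[OF S, of "U *\<^sub>v v"] isometry[OF v] U by auto
qed

lemma column_perturbation_bound:
  fixes S11 H11 S21 H21 U :: "real mat"
  assumes S11: "S11 \<in> carrier_mat n1 m1" and H11: "H11 \<in> carrier_mat n1 m1"
    and S21: "S21 \<in> carrier_mat n2 m1" and H21: "H21 \<in> carrier_mat n2 m1"
    and U: "U \<in> carrier_mat m1 p" and \<sigma>: "0 < \<sigma>"
    and isometry: "\<And>v. v \<in> carrier_vec p \<Longrightarrow> vec_norm (U *\<^sub>v v) = vec_norm v"
    and S11_below: "\<And>v. v \<in> carrier_vec p \<Longrightarrow> \<sigma> * vec_norm v \<le> vec_norm (S11 *\<^sub>v (U *\<^sub>v v))"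
    and H11_below: "\<And>v. v \<in> carrier_vec p \<Longrightarrow> \<sigma> / 2 * vec_norm v \<le> vec_norm (H11 *\<^sub>v (U *\<^sub>v v))"
    and \<epsilon>11: "frob_norm (H11 - S11) \<le> \<epsilon>" and \<epsilon>21: "frob_norm (H21 - S21) \<le> \<epsilon>"
    and M21: "frob_norm S21 \<le> M"
    and y: "y \<in> carrier_vec p" and y': "y' \<in> carrier_vec p"
  shows "vec_norm (H21 *\<^sub>v (U *\<^sub>v y') - S21 *\<^sub>v (U *\<^sub>v y))
    \<le> 2 * (\<epsilon> + M) / \<sigma> * vec_norm (H11 *\<^sub>v (U *\<^sub>v y') - S11 *\<^sub>v (U *\<^sub>v y))
       + (2 * \<epsilon> / \<sigma> + 2 * M * \<epsilon> / \<sigma>^2) * vec_norm (S11 *\<^sub>v (U *\<^sub>v y))"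
proof -
  define x x' where "x = U *\<^sub>v y" and "x' = U *\<^sub>v y'"
  define s d where "s = vec_norm (S11 *\<^sub>v x)" and "d = vec_norm (H11 *\<^sub>v x' - S11 *\<^sub>v x)"
  have x: "x \<in> carrier_vec m1" and x': "x' \<in> carrier_vec m1" unfolding x_def x'_def using U y y' by auto
  have \<epsilon>: "0 \<le> \<epsilon>" and M: "0 \<le> M" using \<epsilon>11 M21 frob_norm_nonneg order_trans by blast+
  have y_bound: "vec_norm y \<le> s / \<sigma>"
    using S11_below[OF y] \<sigma> unfolding s_def x_def by (simp add: field_simps)
  have y'_bound: "vec_norm y' \<le> 2 / \<sigma> * (d + s)"
  proof -
    have "vec_norm (H11 *\<^sub>v x') \<le> s + d"
      unfolding s_def d_def using vec_norm_le_add_diff[of _ n1] H11 S11 x x' by simp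
    then show ?thesis using H11_below[OF y'] \<sigma> unfolding x'_def by (simp add: field_simps)
  qed
  have diff_bound: "vec_norm (y' - y) \<le> 2 / \<sigma> * (d + \<epsilon> * (s / \<sigma>))"
  proof -
    have "\<sigma> / 2 * vec_norm (y' - y) \<le> vec_norm (H11 *\<^sub>v (U *\<^sub>v (y' - y)))"
      using H11_below y y' by simp
    also have "H11 *\<^sub>v (U *\<^sub>v (y' - y)) = (H11 *\<^sub>v x' - S11 *\<^sub>v x) - (H11 *\<^sub>v x - S11 *\<^sub>v x)"
      unfolding x_def x'_def using H11 S11 U y y'
      by (simp add: mult_minus_distrib_mat_vec) (intro eq_vecI; simp)
    also have "vec_norm \<dots> \<le> d + vec_norm (H11 *\<^sub>v x - S11 *\<^sub>v x)"
      unfolding d_def using vec_norm_diff_le[of _ n1] H11 S11 x x' by simp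
    also have "vec_norm (H11 *\<^sub>v x - S11 *\<^sub>v x) \<le> \<epsilon> * vec_norm y"
      using vec_norm_mult_mat_vec_diff_le[OF H11 S11 x \<epsilon>11] isometry[OF y] unfolding x_def by simp
    also have "\<dots> \<le> \<epsilon> * (s / \<sigma>)" using y_bound \<epsilon> by (rule mult_left_mono)
    finally have "2 / \<sigma> * (\<sigma> / 2 * vec_norm (y' - y)) \<le> 2 / \<sigma> * (d + \<epsilon> * (s / \<sigma>))"
      using \<sigma> by (intro mult_left_mono) auto
    then show ?thesis using \<sigma> by simp
  qed
  have "vec_norm (H21 *\<^sub>v x' - S21 *\<^sub>v x) \<le> \<epsilon> * vec_norm y' + M * vec_norm (y' - y)"
    using vec_norm_mult_mat_vec_diff_le_perturbed[OF S21 H21 x x' \<epsilon>21 M21] isometry[OF y']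
      isometry[of "y' - y"] U y y' unfolding x_def x'_def by (simp add: mult_minus_distrib_mat_vec)
  also have "\<dots> \<le> \<epsilon> * (2 / \<sigma> * (d + s)) + M * (2 / \<sigma> * (d + \<epsilon> * (s / \<sigma>)))"
    using y'_bound diff_bound \<epsilon> M by (intro add_mono mult_left_mono)
  also have "\<dots> = 2 * (\<epsilon> + M) / \<sigma> * d + (2 * \<epsilon> / \<sigma> + 2 * M * \<epsilon> / \<sigma>^2) * s"
    using \<sigma> by (simp add: field_simps power2_eq_square)
  finally show ?thesis unfolding x_def x'_def d_def s_def .
qed

lemma block_perturbation_bound:
  fixes H11 H12 H21 H22 S11 S12 S21 S22 U :: "real mat"
  assumes H11: "H11 \<in> carrier_mat n1 m1" and H12: "H12 \<in> carrier_mat n1 m2"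
    and H21: "H21 \<in> carrier_mat n2 m1" and H22: "H22 \<in> carrier_mat n2 m2"
    and S11: "S11 \<in> carrier_mat n1 m1" and S12: "S12 \<in> carrier_mat n1 m2"
    and S21: "S21 \<in> carrier_mat n2 m1" and S22: "S22 \<in> carrier_mat n2 m2"
    and rank_H: "mat_rank (four_block_mat H11 H12 H21 H22) \<le> p"
    and rank_S: "mat_rank (four_block_mat S11 S12 S21 S22) \<le> p"
    and U: "U \<in> carrier_mat m1 p" and \<sigma>: "0 < \<sigma>"
    and isometry: "\<And>v. v \<in> carrier_vec p \<Longrightarrow> vec_norm (U *\<^sub>v v) = vec_norm v"
    and S11_below: "\<And>v. v \<in> carrier_vec p \<Longrightarrow> \<sigma> * vec_norm v \<le> vec_norm (S11 *\<^sub>v (U *\<^sub>v v))"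
    and \<epsilon>11: "frob_norm (H11 - S11) \<le> \<epsilon>" and \<epsilon>12: "frob_norm (H12 - S12) \<le> \<epsilon>"
    and \<epsilon>21: "frob_norm (H21 - S21) \<le> \<epsilon>"
    and M12: "frob_norm S12 \<le> M" and M21: "frob_norm S21 \<le> M" and \<epsilon>\<sigma>: "\<epsilon> \<le> \<sigma> / 2"
  shows "frob_norm (H22 - S22) \<le> 2 * (\<epsilon> + M) / \<sigma> * \<epsilon> + (2 * \<epsilon> / \<sigma> + 2 * M * \<epsilon> / \<sigma>^2) * M"
proof -
  have \<epsilon>: "0 \<le> \<epsilon>" and M: "0 \<le> M" using \<epsilon>11 M21 frob_norm_nonneg order_trans by blast+
  have H11_below: "\<sigma> / 2 * vec_norm v \<le> vec_norm (H11 *\<^sub>v (U *\<^sub>v v))" if v: "v \<in> carrier_vec p" for v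
  proof -
    have "\<sigma> / 2 * vec_norm v \<le> (\<sigma> - \<epsilon>) * vec_norm v"
      using \<epsilon>\<sigma> vec_norm_nonneg[of v] by (intro mult_right_mono) auto
    also have "\<dots> \<le> vec_norm (S11 *\<^sub>v (U *\<^sub>v v)) - \<epsilon> * vec_norm (U *\<^sub>v v)"
      using S11_below[OF v] isometry[OF v] by (simp add: left_diff_distrib)
    also have "\<dots> \<le> vec_norm (H11 *\<^sub>v (U *\<^sub>v v))"
      using vec_norm_mult_mat_vec_le_perturbed[OF S11 H11 _ \<epsilon>11, of "U *\<^sub>v v"] U v by simp
    finally show ?thesis .
  qed
  have inj_S: "y = 0\<^sub>v p" if "y \<in> carrier_vec p" "S11 *\<^sub>v (U *\<^sub>v y) = 0\<^sub>v n1" for y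
    by (rule injective_of_lower_bound[OF \<sigma> S11_below that])
  have inj_H: "y = 0\<^sub>v p" if "y \<in> carrier_vec p" "H11 *\<^sub>v (U *\<^sub>v y) = 0\<^sub>v n1" for y
    by (rule injective_of_lower_bound[OF _ H11_below that]) (use \<sigma> in simp)
  obtain Y where Y: "\<And>j. j < m2 \<Longrightarrow> Y j \<in> carrier_vec p"
    and Y12: "\<And>j. j < m2 \<Longrightarrow> col S12 j = S11 *\<^sub>v (U *\<^sub>v Y j)"
    and Y22: "\<And>j. j < m2 \<Longrightarrow> col S22 j = S21 *\<^sub>v (U *\<^sub>v Y j)"
    using four_block_mat_cols_in_range[OF S11 S12 S21 S22 U rank_S inj_S] by blast
  obtain Y' where Y': "\<And>j. j < m2 \<Longrightarrow> Y' j \<in> carrier_vec p"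
    and Y'12: "\<And>j. j < m2 \<Longrightarrow> col H12 j = H11 *\<^sub>v (U *\<^sub>v Y' j)"
    and Y'22: "\<And>j. j < m2 \<Longrightarrow> col H22 j = H21 *\<^sub>v (U *\<^sub>v Y' j)"
    using four_block_mat_cols_in_range[OF H11 H12 H21 H22 U rank_H inj_H] by blast
  have "frob_norm (H22 - S22)
      \<le> 2 * (\<epsilon> + M) / \<sigma> * frob_norm (H12 - S12) + (2 * \<epsilon> / \<sigma> + 2 * M * \<epsilon> / \<sigma>^2) * frob_norm S12"
  proof (rule frob_norm_le_of_col_bounds[OF minus_carrier_mat[OF S22] minus_carrier_mat[OF S12] S12])
    fix j assume j: "j < m2"
    have "col (H22 - S22) j = H21 *\<^sub>v (U *\<^sub>v Y' j) - S21 *\<^sub>v (U *\<^sub>v Y j)"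
      unfolding col_minus_mat[OF H22 S22 j] Y22[OF j] Y'22[OF j] ..
    moreover have "col (H12 - S12) j = H11 *\<^sub>v (U *\<^sub>v Y' j) - S11 *\<^sub>v (U *\<^sub>v Y j)"
      unfolding col_minus_mat[OF H12 S12 j] Y12[OF j] Y'12[OF j] ..
    ultimately show "vec_norm (col (H22 - S22) j) \<le> 2 * (\<epsilon> + M) / \<sigma> * vec_norm (col (H12 - S12) j)
        + (2 * \<epsilon> / \<sigma> + 2 * M * \<epsilon> / \<sigma>^2) * vec_norm (col S12 j)"
      unfolding Y12[OF j]
      by (simp only:) (rule column_perturbation_bound[OF S11 H11 S21 H21 U \<sigma> isometry S11_below
          H11_below \<epsilon>11 \<epsilon>21 M21 Y[OF j] Y'[OF j]])
  qed (use \<epsilon> M \<sigma> in auto)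
  also have "\<dots> \<le> 2 * (\<epsilon> + M) / \<sigma> * \<epsilon> + (2 * \<epsilon> / \<sigma> + 2 * M * \<epsilon> / \<sigma>^2) * M"
    using \<epsilon>12 M12 \<epsilon> M \<sigma> by (intro add_mono mult_left_mono) auto
  finally show ?thesis .
qed

lemma perturbation_constant_le:
  fixes \<sigma> \<epsilon> M :: real
  assumes \<sigma>: "0 < \<sigma>" and \<epsilon>: "0 \<le> \<epsilon>" "\<epsilon> \<le> \<sigma> / 2" and M: "\<sigma> \<le> M"
  shows "2 * (\<epsilon> + M) / \<sigma> * \<epsilon> + (2 * \<epsilon> / \<sigma> + 2 * M * \<epsilon> / \<sigma>^2) * M \<le> 8 * \<epsilon> * M^2 / \<sigma>^2"
proof -
  have "2 * \<epsilon> * \<sigma> \<le> \<sigma> * \<sigma>" using \<epsilon> \<sigma> by (intro mult_right_mono) auto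
  also have "\<dots> \<le> M * M" using \<sigma> M by (intro mult_mono) auto
  finally have "2 * \<epsilon> * \<sigma> \<le> M^2" by (simp add: power2_eq_square)
  moreover have "M * \<sigma> \<le> M^2" using \<sigma> M by (simp add: power2_eq_square mult_left_mono)
  ultimately have "2 * \<epsilon> * \<sigma> + 4 * (M * \<sigma>) + 2 * M^2 \<le> 8 * M^2"
    using zero_le_power2[of M] by linarith
  then have "\<epsilon> * (2 * \<epsilon> * \<sigma> + 4 * (M * \<sigma>) + 2 * M^2) \<le> \<epsilon> * (8 * M^2)"
    using \<epsilon>(1) by (rule mult_left_mono)
  moreover have "2 * (\<epsilon> + M) / \<sigma> * \<epsilon> + (2 * \<epsilon> / \<sigma> + 2 * M * \<epsilon> / \<sigma>^2) * M
      = \<epsilon> * (2 * \<epsilon> * \<sigma> + 4 * (M * \<sigma>) + 2 * M^2) / \<sigma>^2"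
    using \<sigma> by (simp add: field_simps power2_eq_square)
  ultimately show ?thesis using \<sigma> by (simp add: divide_right_mono)
qed

theorem mainTheorem3:
  fixes n1 n2 m1 m2 p :: nat and \<epsilon> M :: real
    and H11 H12 H21 H22 S11 S12 S21 S22 :: "real mat"
  assumes "H11 \<in> carrier_mat n1 m1" "H12 \<in> carrier_mat n1 m2"
      "H21 \<in> carrier_mat n2 m1" "H22 \<in> carrier_mat n2 m2"
      "S11 \<in> carrier_mat n1 m1" "S12 \<in> carrier_mat n1 m2"
      "S21 \<in> carrier_mat n2 m1" "S22 \<in> carrier_mat n2 m2"
    and "mat_rank (four_block_mat H11 H12 H21 H22) \<le> p"
    and "mat_rank (four_block_mat S11 S12 S21 S22) = p"
    and "sigma p S11 > 0"
    and "frob_norm (H11 - S11) \<le> \<epsilon>" "frob_norm (H12 - S12) \<le> \<epsilon>"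
        "frob_norm (H21 - S21) \<le> \<epsilon>"
    and "frob_norm S11 \<le> M" "frob_norm S12 \<le> M" "frob_norm S21 \<le> M"
    and "\<epsilon> \<le> sigma p S11 / 2"
  shows "frob_norm (H22 - S22) \<le> 8 * \<epsilon> * M^2 / (sigma p S11)^2"
proof -
  define \<sigma> where "\<sigma> = sigma p S11"
  have \<sigma>: "0 < \<sigma>" and p: "0 < p" using assms(11) unfolding \<sigma>_def sigma_def by (auto split: if_splits)
  have \<epsilon>: "0 \<le> \<epsilon>" using assms(12) frob_norm_nonneg order_trans by blast
  have rank_S: "mat_rank (four_block_mat S11 S12 S21 S22) \<le> p" using assms(10) by simp
  obtain U where U: "U \<in> carrier_mat m1 p"
    and isometry: "\<And>y. y \<in> carrier_vec p \<Longrightarrow> vec_norm (U *\<^sub>v y) = vec_norm y"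
    and below: "\<And>y. y \<in> carrier_vec p \<Longrightarrow> \<sigma> * vec_norm y \<le> vec_norm (S11 *\<^sub>v (U *\<^sub>v y))"
    using sigma_pos_obtains_isometry[OF assms(5,11), folded \<sigma>_def] by blast
  have M: "\<sigma> \<le> M"
    using lower_bound_le_frob_norm[OF assms(5) U p isometry below] assms(15) by simp
  have "frob_norm (H22 - S22) \<le> 2 * (\<epsilon> + M) / \<sigma> * \<epsilon> + (2 * \<epsilon> / \<sigma> + 2 * M * \<epsilon> / \<sigma>^2) * M"
    by (rule block_perturbation_bound[OF assms(1-9) rank_S U \<sigma> isometry below assms(12-14,16,17)
          assms(18)[folded \<sigma>_def]])
  also have "\<dots> \<le> 8 * \<epsilon> * M^2 / \<sigma>^2"
    by (rule perturbation_constant_le[OF \<sigma> \<epsilon> assms(18)[folded \<sigma>_def] M])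
  finally show ?thesis unfolding \<sigma>_def .
qed

end
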